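(* Let $f:\mathbb{R}^n\to\mathbb{R}$ be a continuously differentiable convex function, and $s$ a positive integer. Let $h(x)=\sum_{i=1}^n h_i(x_i)$ with each $h_i:\mathbb{R}\to\mathbb{R}$ convex and continuously differentiable, with $h$ supercoercive ($\lim_{\|x\|\to\infty}h(x)/\|x\|=\infty$), and assume: (i) if $x_k\to x$ then $D_h(x,x_k)\to0$; (ii) if $D_h(x,x_k)\to0$ for some $x$, then $x_k\to x$; (iii) if $D_h(x_{k+1},x_k)\to0$ then $\|x_{k+1}-x_k\|\to0$ (for all sequences $(x_k)$ in $\mathbb{R}^n$). Assume $L_hh-f$ is convex for some $L_h>0$ and $L>L_h$. Let $(x_k)$ be generated by the BPG algorithm with $h$ and $L$. If $(x_k)$ has a limit point $\bar x$ with $\|\bar x\|_0=s$, then the entire sequence $(x_k)$ converges to $\bar x$.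
   Context: $C_s=\{x\in\mathbb{R}^n:\|x\|_0\le s\}$ where $\|x\|_0$ is the number of nonzero entries. $D_h(y,x)=h(y)-h(x)-\nabla h(x)^T(y-x)$. BPG algorithm: start from $x_0\in C_s$ and for $k\ge0$ pick $x_{k+1}\in\operatorname{argmin}_{x\in C_s}\ \nabla f(x_k)^T(x-x_k)+LD_h(x,x_k)$. *)

theory Defs
  imports "HOL-Analysis.Analysis"
begin

definition l0 :: "real ^ 'n \<Rightarrow> nat" where
  "l0 x = card {i. x $ i \<noteq> 0}"

definition sparse_set :: "nat \<Rightarrow> (real ^ 'n) set" where
  "sparse_set s = {x. l0 x \<le> s}"

definition bregman :: "(real ^ 'n \<Rightarrow> real) \<Rightarrow> (real ^ 'n \<Rightarrow> real ^ 'n)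
    \<Rightarrow> real ^ 'n \<Rightarrow> real ^ 'n \<Rightarrow> real" where
  "bregman h gh y x = h y - h x - gh x \<bullet> (y - x)"

definition is_BPG_sequence :: "nat \<Rightarrow> (real ^ 'n \<Rightarrow> real ^ 'n) \<Rightarrow> (real ^ 'n \<Rightarrow> real)
    \<Rightarrow> (real ^ 'n \<Rightarrow> real ^ 'n) \<Rightarrow> real \<Rightarrow> (nat \<Rightarrow> real ^ 'n) \<Rightarrow> bool" where
  "is_BPG_sequence s gf h gh L x \<longleftrightarrow>
     x 0 \<in> sparse_set s \<and>
     (\<forall>k. x (Suc k) \<in> sparse_set s \<and>
          (\<forall>y \<in> sparse_set s.
             gf (x k) \<bullet> (x (Suc k) - x k) + L * bregman h gh (x (Suc k)) (x k)
             \<le> gf (x k) \<bullet> (y - x k) + L * bregman h gh y (x k)))"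

end

theory Submission
  imports Defs
begin

(*
  Relative smoothness (Lh h - f convex) makes every BPG step a descent step,
  f(x_{k+1}) + (L - Lh) D_h(x_{k+1}, x_k) <= f(x_k), so f(x_k) decreases to f(xbar) and the
  Bregman steps, hence by (iii) the steps themselves, tend to 0.  Since xbar has the maximal
  number s of nonzero entries, points of C_s near xbar have their support inside that of xbar.
  For such an iterate x_{k+1} the whole line through x_{k+1} and xbar lies in C_s, and
  first-order optimality of x_{k+1} along it, combined with the three-point identity for D_h,
  gives D_h(xbar, x_{k+1}) <= D_h(xbar, x_k).  Along the convergent subsequence some iterate is
  D_h-close to xbar; from then on the iterates are trapped near xbar, D_h(xbar, x_k) decreases
  to 0, and (ii) gives x_k -> xbar.
*)

lemma has_derivative_along_line:
  fixes \<phi> :: "'a::real_normed_vector \<Rightarrow> real"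
  assumes "(\<phi> has_derivative \<phi>') (at a)"
  shows "((\<lambda>t. \<phi> (a + t *\<^sub>R d)) has_real_derivative \<phi>' d) (at 0)"
proof -
  have "((\<lambda>t::real. a + t *\<^sub>R d) has_derivative (\<lambda>t. t *\<^sub>R d)) (at 0)"
    by (auto intro!: derivative_eq_intros)
  with assms have "((\<lambda>t. \<phi> (a + t *\<^sub>R d)) has_derivative (\<lambda>t. \<phi>' (t *\<^sub>R d))) (at 0)"
    using has_derivative_compose[of "\<lambda>t::real. a + t *\<^sub>R d"] by fastforce
  moreover have "\<phi>' (t *\<^sub>R d) = \<phi>' d * t" for t
    using linear_scale[OF has_derivative_linear[OF assms]] by simp
  ultimately show ?thesis
    by (simp add: has_field_derivative_def)
qed

lemma convex_on_above_linearization: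
  fixes \<phi> :: "'a::real_normed_vector \<Rightarrow> real"
  assumes "convex_on UNIV \<phi>" and "(\<phi> has_derivative \<phi>') (at z)"
  shows "\<phi> z + \<phi>' (y - z) \<le> \<phi> y"
proof -
  let ?g = "\<lambda>t. \<phi> (z + t *\<^sub>R (y - z))"
  have "convex_on UNIV ?g"
  proof (rule convex_onI)
    fix t a b :: real
    have "z + ((1 - t) *\<^sub>R a + t *\<^sub>R b) *\<^sub>R (y - z)
        = (1 - t) *\<^sub>R (z + a *\<^sub>R (y - z)) + t *\<^sub>R (z + b *\<^sub>R (y - z))"
      by (simp add: algebra_simps)
    moreover assume "0 < t" "t < 1"
    ultimately show "?g ((1 - t) *\<^sub>R a + t *\<^sub>R b) \<le> (1 - t) * ?g a + t * ?g b"
      using convex_onD[OF assms(1), of t] by simp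
  qed simp
  moreover have "(?g has_real_derivative \<phi>' (y - z)) (at 0)"
    by (rule has_derivative_along_line[OF assms(2)])
  ultimately have "\<phi>' (y - z) * (1 - 0) \<le> ?g 1 - ?g 0"
    by (intro convex_on_imp_above_tangent) auto
  then show ?thesis by simp
qed

lemma derivative_zero_at_line_minimum:
  fixes \<phi> :: "'a::real_normed_vector \<Rightarrow> real"
  assumes "(\<phi> has_derivative \<phi>') (at a)" and "\<And>t. \<phi> a \<le> \<phi> (a + t *\<^sub>R d)"
  shows "\<phi>' d = 0"
  using DERIV_local_min[OF has_derivative_along_line[OF assms(1)], of 1] assms(2) by simp

lemma eventually_decreasing_LIMSEQ_subseq:
  fixes a :: "nat \<Rightarrow> real"
  assumes dec: "\<And>k. N \<le> k \<Longrightarrow> a (Suc k) \<le> a k"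
    and r: "strict_mono r" and lim: "(a \<circ> r) \<longlonglongrightarrow> l"
  shows "a \<longlonglongrightarrow> l"
proof -
  have tail: "decseq (\<lambda>k. a (k + N))"
    using dec by (simp add: decseq_Suc_iff)
  have "l \<le> a (k + N)" for k
  proof (rule LIMSEQ_le_const2[OF lim], intro exI allI impI)
    fix j assume "k + N \<le> j"
    then have "k \<le> r j - N" "r j = r j - N + N"
      using seq_suble[OF r, of j] by auto
    then show "(a \<circ> r) j \<le> a (k + N)"
      using decseqD[OF tail] by (metis comp_apply)
  qed
  then obtain L where "(\<lambda>k. a (k + N)) \<longlonglongrightarrow> L"
    using decseq_convergent[OF tail] by blast
  then have "a \<longlonglongrightarrow> L" by (rule LIMSEQ_offset)
  moreover have "L = l"
    using LIMSEQ_unique[OF LIMSEQ_subseq_LIMSEQ[OF \<open>a \<longlonglongrightarrow> L\<close> r] lim] by simp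
  ultimately show ?thesis by simp
qed

lemma small_values_imp_near:
  fixes V :: "'a::metric_space \<Rightarrow> real"
  assumes nonneg: "\<And>y. 0 \<le> V y"
    and forces: "\<And>Y. (\<lambda>k. V (Y k)) \<longlonglongrightarrow> 0 \<Longrightarrow> Y \<longlonglongrightarrow> z"
    and "e > 0"
  obtains \<delta> where "\<delta> > 0" and "\<And>y. V y < \<delta> \<Longrightarrow> dist y z < e"
proof (rule ccontr)
  assume "\<not> thesis"
  then have "\<forall>k::nat. \<exists>y. V y < 1 / Suc k \<and> e \<le> dist y z"
    using that by (metis not_less of_nat_0_less_iff zero_less_Suc zero_less_divide_1_iff)
  then obtain Y where Y: "\<And>k. V (Y k) < 1 / Suc k" "\<And>k. e \<le> dist (Y k) z"
    by metis
  have "(\<lambda>k. V (Y k)) \<longlonglongrightarrow> 0"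
  proof (rule tendsto_sandwich[of "\<lambda>k. 0" _ _ "\<lambda>k. 1 / Suc k"])
    show "\<forall>\<^sub>F k in sequentially. V (Y k) \<le> 1 / Suc k"
      using Y(1) by (simp add: less_imp_le del: of_nat_Suc)
    show "(\<lambda>k. 1 / real (Suc k)) \<longlonglongrightarrow> 0"
      by (rule LIMSEQ_Suc[OF lim_const_over_n])
  qed (use nonneg in auto)
  then have "\<forall>\<^sub>F k in sequentially. dist (Y k) z < e"
    using forces \<open>e > 0\<close> by (simp add: tendsto_iff)
  then obtain k where "dist (Y k) z < e"
    by (auto simp: eventually_sequentially)
  with Y(2)[of k] show False by simp
qed

lemma sparse_set_if_support_subset:
  assumes "z \<in> sparse_set s" and "\<And>i. z $ i = 0 \<Longrightarrow> y $ i = 0"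
  shows "y \<in> sparse_set s"
proof -
  have "card {i. y $ i \<noteq> 0} \<le> card {i. z $ i \<noteq> 0}"
    using assms(2) by (intro card_mono) auto
  then show ?thesis
    using assms(1) by (simp add: sparse_set_def l0_def)
qed

lemma full_support_neighbourhood:
  fixes xbar :: "real ^ 'n::finite"
  assumes "l0 xbar = s"
  obtains e where "e > 0"
    and "\<And>y i. y \<in> sparse_set s \<Longrightarrow> dist y xbar < e \<Longrightarrow> xbar $ i = 0 \<Longrightarrow> y $ i = 0"
proof -
  \<comment> \<open>The nonzero entries of xbar stay nonzero near xbar, and C_s has no room for more.\<close>
  define S where "S = {i. xbar $ i \<noteq> 0}"
  have "open (\<Inter>i\<in>S. {y::real ^ 'n. y $ i \<noteq> 0})"
    by (intro open_INT ballI open_Collect_neq continuous_intros) simp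
  moreover have "xbar \<in> (\<Inter>i\<in>S. {y. y $ i \<noteq> 0})" by (simp add: S_def)
  ultimately obtain e where "e > 0" and e: "\<And>y. dist y xbar < e \<Longrightarrow> y \<in> (\<Inter>i\<in>S. {y. y $ i \<noteq> 0})"
    unfolding open_dist by blast
  have "y $ i = 0" if "y \<in> sparse_set s" "dist y xbar < e" "xbar $ i = 0" for y i
  proof -
    have "card {i. y $ i \<noteq> 0} \<le> card S" using that(1) assms by (simp add: sparse_set_def l0_def S_def)
    moreover have "S \<subseteq> {i. y $ i \<noteq> 0}" using e[OF that(2)] by blast
    ultimately have "S = {i. y $ i \<noteq> 0}" by (intro card_seteq) auto
    then show ?thesis using that(3) by (auto simp: S_def)
  qed
  with \<open>e > 0\<close> show thesis by (rule that)
qed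

lemma bregman_three_point:
  "bregman h gh z y - bregman h gh z x - bregman h gh x y = (gh x - gh y) \<bullet> (z - x)"
  unfolding bregman_def inner_diff_left inner_diff_right by linarith

locale sparse_BPG =
  fixes f :: "real ^ 'n::finite \<Rightarrow> real" and gf :: "real ^ 'n \<Rightarrow> real ^ 'n"
    and h :: "real ^ 'n \<Rightarrow> real" and gh :: "real ^ 'n \<Rightarrow> real ^ 'n"
    and s :: nat and Lh L :: real and x :: "nat \<Rightarrow> real ^ 'n"
  assumes f_deriv: "\<And>z. (f has_derivative (\<lambda>v. gf z \<bullet> v)) (at z)"
    and f_convex: "convex_on UNIV f"
    and h_deriv: "\<And>z. (h has_derivative (\<lambda>v. gh z \<bullet> v)) (at z)"
    and rel_smooth: "convex_on UNIV (\<lambda>z. Lh * h z - f z)"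
    and Lh_pos: "0 < Lh" and L_gt: "Lh < L"
    and bpg: "is_BPG_sequence s gf h gh L x"
begin

abbreviation D :: "real ^ 'n \<Rightarrow> real ^ 'n \<Rightarrow> real" where
  "D \<equiv> bregman h gh"

lemma h_convex: "convex_on UNIV h"
proof -
  have "convex_on UNIV (\<lambda>z. (1 / Lh) * ((Lh * h z - f z) + f z))"
    using rel_smooth f_convex Lh_pos by (intro convex_on_cmul convex_on_add) auto
  then show ?thesis
    using Lh_pos by simp
qed

lemma bregman_nonneg: "0 \<le> D y z"
  using convex_on_above_linearization[OF h_convex h_deriv, of z y] by (simp add: bregman_def)

lemma f_above_tangent: "f z + gf z \<bullet> (y - z) \<le> f y"
  by (rule convex_on_above_linearization[OF f_convex f_deriv])

lemma f_below_bregman_model: "f y \<le> f z + gf z \<bullet> (y - z) + Lh * D y z"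
proof -
  have "((\<lambda>z. Lh * h z - f z) has_derivative (\<lambda>v. Lh * (gh z \<bullet> v) - gf z \<bullet> v)) (at z)"
    by (intro derivative_intros h_deriv f_deriv)
  from convex_on_above_linearization[OF rel_smooth this, of y] show ?thesis
    unfolding bregman_def right_diff_distrib by linarith
qed

lemma iterate_sparse: "x k \<in> sparse_set s"
  using bpg unfolding is_BPG_sequence_def by (cases k) auto

lemma iterate_minimizes:
  assumes "y \<in> sparse_set s"
  shows "gf (x k) \<bullet> (x (Suc k) - x k) + L * D (x (Suc k)) (x k)
    \<le> gf (x k) \<bullet> (y - x k) + L * D y (x k)"
  using bpg assms unfolding is_BPG_sequence_def by blast

lemma sufficient_decrease: "f (x (Suc k)) + (L - Lh) * D (x (Suc k)) (x k) \<le> f (x k)"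
proof -
  have "gf (x k) \<bullet> (x (Suc k) - x k) + L * D (x (Suc k)) (x k) \<le> 0"
    using iterate_minimizes[OF iterate_sparse, of k k] by (simp add: bregman_def)
  with f_below_bregman_model[of "x (Suc k)" "x k"] show ?thesis
    unfolding left_diff_distrib by linarith
qed

lemma objective_decseq: "decseq (\<lambda>k. f (x k))"
  unfolding decseq_Suc_iff
  using sufficient_decrease bregman_nonneg L_gt by (smt (verit) mult_nonneg_nonneg)

lemma bregman_to_support_superset_decreases:
  assumes xbar: "xbar \<in> sparse_set s" and below: "f xbar \<le> f (x (Suc k))"
    and supp: "\<And>i. xbar $ i = 0 \<Longrightarrow> x (Suc k) $ i = 0"
  shows "D xbar (x (Suc k)) \<le> D xbar (x k)"
proof -
  define a b d where "a = x (Suc k)" and "b = x k" and "d = xbar - a"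
  have "a + t *\<^sub>R d \<in> sparse_set s" for t
    by (rule sparse_set_if_support_subset[OF xbar]) (simp add: supp a_def d_def)
  then have "gf b \<bullet> (a - b) + L * D a b \<le> gf b \<bullet> (a + t *\<^sub>R d - b) + L * D (a + t *\<^sub>R d) b" for t
    unfolding a_def b_def by (rule iterate_minimizes)
  moreover have "((\<lambda>y. gf b \<bullet> (y - b) + L * D y b)
      has_derivative (\<lambda>v. gf b \<bullet> v + L * ((gh a - gh b) \<bullet> v))) (at a)"
    unfolding bregman_def by (rule derivative_eq_intros h_deriv refl | simp add: inner_diff_left)+
  ultimately have stationary: "gf b \<bullet> d + L * ((gh a - gh b) \<bullet> d) = 0"
    by (intro derivative_zero_at_line_minimum) auto
  have "gf b \<bullet> d = gf b \<bullet> (xbar - b) - gf b \<bullet> (a - b)"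
    by (simp add: d_def inner_diff_right)
  also have "\<dots> \<le> Lh * D a b"
    using f_above_tangent[of b xbar] f_below_bregman_model[of a b] below by (simp add: a_def)
  finally have descent: "gf b \<bullet> d \<le> Lh * D a b" .
  have "D xbar b - D xbar a - D a b = (gh a - gh b) \<bullet> d"
    unfolding d_def by (rule bregman_three_point)
  with stationary have "gf b \<bullet> d + L * (D xbar b - D xbar a - D a b) = 0"
    by simp
  then have "L * D xbar a = L * D xbar b - L * D a b + gf b \<bullet> d"
    unfolding right_diff_distrib by linarith
  also have "\<dots> \<le> L * D xbar b - (L - Lh) * D a b"
    using descent by (simp add: algebra_simps)
  also have "\<dots> \<le> L * D xbar b"
    using bregman_nonneg[of a b] L_gt by simp
  finally show ?thesis
    using L_gt Lh_pos by (simp add: a_def b_def)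
qed

context
  fixes r and xbar
  assumes r: "strict_mono r" and subseq_lim: "(x \<circ> r) \<longlonglongrightarrow> xbar"
begin

lemma objective_tendsto: "(\<lambda>k. f (x k)) \<longlonglongrightarrow> f xbar"
proof -
  have "isCont f xbar"
    using f_deriv has_derivative_continuous by blast
  then have lim: "((\<lambda>k. f (x k)) \<circ> r) \<longlonglongrightarrow> f xbar"
    using isCont_tendsto_compose[OF _ subseq_lim] by (simp add: o_def)
  show ?thesis
    by (rule eventually_decreasing_LIMSEQ_subseq[where N = 0, OF _ r lim])
      (use objective_decseq in \<open>simp add: decseq_Suc_iff\<close>)
qed

lemma objective_limit_le: "f xbar \<le> f (x k)"
  by (rule decseq_ge[OF objective_decseq objective_tendsto])

lemma step_bregman_tendsto_zero: "(\<lambda>k. D (x (Suc k)) (x k)) \<longlonglongrightarrow> 0"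
proof (rule tendsto_sandwich[of "\<lambda>k. 0" _ _ "\<lambda>k. (f (x k) - f (x (Suc k))) / (L - Lh)"])
  have "(L - Lh) * D (x (Suc k)) (x k) \<le> f (x k) - f (x (Suc k))" for k
    using sufficient_decrease[of k] by simp
  then show "\<forall>\<^sub>F k in sequentially. D (x (Suc k)) (x k) \<le> (f (x k) - f (x (Suc k))) / (L - Lh)"
    using L_gt by (simp add: pos_le_divide_eq mult.commute)
  have "(\<lambda>k. (f (x k) - f (x (Suc k))) / (L - Lh)) \<longlonglongrightarrow> (f xbar - f xbar) / (L - Lh)"
    using L_gt
    by (intro tendsto_divide tendsto_diff tendsto_const objective_tendsto
        LIMSEQ_Suc[OF objective_tendsto]) auto
  then show "(\<lambda>k. (f (x k) - f (x (Suc k))) / (L - Lh)) \<longlonglongrightarrow> 0" by simp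
qed (auto simp: bregman_nonneg)

lemma bregman_to_full_support_limit_eventually_decreasing:
  assumes full: "l0 xbar = s"
    and forces_lim: "\<And>Y. (\<lambda>k. D xbar (Y k)) \<longlonglongrightarrow> 0 \<Longrightarrow> Y \<longlonglongrightarrow> xbar"
    and steps: "(\<lambda>k. norm (x (Suc k) - x k)) \<longlonglongrightarrow> 0"
    and subseq_bregman: "((\<lambda>k. D xbar (x k)) \<circ> r) \<longlonglongrightarrow> 0"
  obtains k0 where "\<And>k. k0 \<le> k \<Longrightarrow> D xbar (x (Suc k)) \<le> D xbar (x k)"
proof -
  obtain e where "e > 0"
    and near: "\<And>y i. y \<in> sparse_set s \<Longrightarrow> dist y xbar < e \<Longrightarrow> xbar $ i = 0 \<Longrightarrow> y $ i = 0"
    using full_support_neighbourhood[OF full] by blast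
  obtain \<delta> where "\<delta> > 0" and close: "\<And>y. D xbar y < \<delta> \<Longrightarrow> dist y xbar < e / 2"
    by (rule small_values_imp_near[of "D xbar" xbar "e / 2"])
      (use bregman_nonneg forces_lim \<open>e > 0\<close> in auto)
  obtain K where K: "\<And>k. K \<le> k \<Longrightarrow> norm (x (Suc k) - x k) < e / 2"
    using LIMSEQ_D[OF steps, of "e / 2"] \<open>e > 0\<close> by auto
  have descends: "D xbar (x (Suc k)) \<le> D xbar (x k)" if "K \<le> k" and "D xbar (x k) < \<delta>" for k
  proof (rule bregman_to_support_superset_decreases)
    show "xbar \<in> sparse_set s"
      using full by (simp add: sparse_set_def)
    show "f xbar \<le> f (x (Suc k))"
      by (rule objective_limit_le)
    have "dist (x (Suc k)) xbar \<le> norm (x (Suc k) - x k) + dist (x k) xbar"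
      using dist_triangle[of "x (Suc k)" xbar "x k"] by (simp add: dist_norm)
    then have "dist (x (Suc k)) xbar < e"
      using K[OF that(1)] close[OF that(2)] by simp
    then show "\<And>i. xbar $ i = 0 \<Longrightarrow> x (Suc k) $ i = 0"
      using near iterate_sparse by blast
  qed
  have "\<forall>\<^sub>F j in sequentially. D xbar (x (r j)) < \<delta>"
    using subseq_bregman \<open>\<delta> > 0\<close> by (auto dest: order_tendstoD(2))
  then obtain J where J: "\<And>j. J \<le> j \<Longrightarrow> D xbar (x (r j)) < \<delta>"
    by (auto simp: eventually_sequentially)
  define k0 where "k0 = r (max J K)"
  have "K \<le> k0" and "D xbar (x k0) < \<delta>"
    using seq_suble[OF r, of "max J K"] J[of "max J K"] by (auto simp: k0_def)
  have trapped: "D xbar (x k) < \<delta>" if "k0 \<le> k" for k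
    using that
  proof (induction k rule: dec_induct)
    case base
    show ?case by fact
  next
    case (step k)
    with \<open>K \<le> k0\<close> have "D xbar (x (Suc k)) \<le> D xbar (x k)"
      by (intro descends) auto
    with step.IH show ?case by simp
  qed
  have "D xbar (x (Suc k)) \<le> D xbar (x k)" if "k0 \<le> k" for k
    using that \<open>K \<le> k0\<close> trapped[OF that] by (intro descends) auto
  then show thesis by (rule that)
qed

lemma tendsto_full_support_limit_point:
  assumes cond_i: "\<And>(Y :: nat \<Rightarrow> real ^ 'n) z. Y \<longlonglongrightarrow> z \<Longrightarrow> (\<lambda>k. D z (Y k)) \<longlonglongrightarrow> 0"
    and cond_ii: "\<And>(Y :: nat \<Rightarrow> real ^ 'n) z. (\<lambda>k. D z (Y k)) \<longlonglongrightarrow> 0 \<Longrightarrow> Y \<longlonglongrightarrow> z"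
    and cond_iii: "\<And>Y :: nat \<Rightarrow> real ^ 'n.
      (\<lambda>k. D (Y (Suc k)) (Y k)) \<longlonglongrightarrow> 0 \<Longrightarrow> (\<lambda>k. norm (Y (Suc k) - Y k)) \<longlonglongrightarrow> 0"
    and full: "l0 xbar = s"
  shows "x \<longlonglongrightarrow> xbar"
proof -
  have subseq_bregman: "((\<lambda>k. D xbar (x k)) \<circ> r) \<longlonglongrightarrow> 0"
    using cond_i[OF subseq_lim] by (simp add: o_def)
  obtain k0 where "\<And>k. k0 \<le> k \<Longrightarrow> D xbar (x (Suc k)) \<le> D xbar (x k)"
    using bregman_to_full_support_limit_eventually_decreasing[OF full cond_ii
        cond_iii[OF step_bregman_tendsto_zero] subseq_bregman] by blast
  then have "(\<lambda>k. D xbar (x k)) \<longlonglongrightarrow> 0"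
    by (rule eventually_decreasing_LIMSEQ_subseq[OF _ r subseq_bregman])
  then show ?thesis
    by (rule cond_ii)
qed

end

end

lemma separable_has_derivative:
  fixes hs dhs :: "'n::finite \<Rightarrow> real \<Rightarrow> real"
  assumes "\<And>i t. (hs i has_real_derivative dhs i t) (at t)"
  shows "((\<lambda>z. \<Sum>i\<in>UNIV. hs i (z $ i)) has_derivative (\<lambda>v. (\<chi> i. dhs i (z $ i)) \<bullet> v)) (at z)"
proof -
  have "((\<lambda>z. hs i (z $ i)) has_derivative (\<lambda>v. dhs i (z $ i) * v $ i)) (at z)" for i
    using has_derivative_compose[OF bounded_linear.has_derivative[OF bounded_linear_vec_nth has_derivative_ident]
          assms[unfolded has_field_derivative_def]]
    by (simp add: mult.commute)
  then have "((\<lambda>z. \<Sum>i\<in>UNIV. hs i (z $ i)) has_derivative (\<lambda>v. \<Sum>i\<in>UNIV. dhs i (z $ i) * v $ i)) (at z)"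
    by (rule has_derivative_sum)
  then show ?thesis by (simp add: inner_vec_def)
qed

theorem theoremA4:
  fixes f :: "real ^ 'n \<Rightarrow> real"
    and gf :: "real ^ 'n \<Rightarrow> real ^ 'n"
    and hs :: "'n \<Rightarrow> real \<Rightarrow> real"
    and dhs :: "'n \<Rightarrow> real \<Rightarrow> real"
    and s :: nat
    and Lh L :: real
    and x :: "nat \<Rightarrow> real ^ 'n"
    and xbar :: "real ^ 'n"
  defines "h \<equiv> (\<lambda>z. \<Sum>i\<in>UNIV. hs i (z $ i))"
    and "gh \<equiv> (\<lambda>z. \<chi> i. dhs i (z $ i))"
  assumes f_deriv: "\<And>z. (f has_derivative (\<lambda>v. gf z \<bullet> v)) (at z)"
    and gf_cont: "continuous_on UNIV gf"
    and f_convex: "convex_on UNIV f"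
    and s_pos: "s > 0"
    and hs_deriv: "\<And>i t. (hs i has_real_derivative dhs i t) (at t)"
    and dhs_cont: "\<And>i. continuous_on UNIV (dhs i)"
    and hs_convex: "\<And>i. convex_on UNIV (hs i)"
    and h_supercoercive: "filterlim (\<lambda>z. h z / norm z) at_top at_infinity"
    and cond_i: "\<And>(y :: nat \<Rightarrow> real ^ 'n) z. y \<longlonglongrightarrow> z \<Longrightarrow>
                   (\<lambda>k. bregman h gh z (y k)) \<longlonglongrightarrow> 0"
    and cond_ii: "\<And>(y :: nat \<Rightarrow> real ^ 'n) z. (\<lambda>k. bregman h gh z (y k)) \<longlonglongrightarrow> 0 \<Longrightarrow>
                   y \<longlonglongrightarrow> z"
    and cond_iii: "\<And>(y :: nat \<Rightarrow> real ^ 'n).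
                   (\<lambda>k. bregman h gh (y (Suc k)) (y k)) \<longlonglongrightarrow> 0 \<Longrightarrow>
                   (\<lambda>k. norm (y (Suc k) - y k)) \<longlonglongrightarrow> 0"
    and Lh_pos: "Lh > 0"
    and rel_smooth: "convex_on UNIV (\<lambda>z. Lh * h z - f z)"
    and L_gt: "L > Lh"
    and bpg: "is_BPG_sequence s gf h gh L x"
    and limpt: "\<exists>r. strict_mono r \<and> (x \<circ> r) \<longlonglongrightarrow> xbar"
    and xbar_l0: "l0 xbar = s"
  shows "x \<longlonglongrightarrow> xbar"
proof -
  \<comment> \<open>Continuity of gf and of the dhs i, s > 0 and supercoercivity of h only ensure that the
    BPG iterates exist, which bpg takes for granted; convexity of the hs i is implied by
    f_convex and rel_smooth (lemma h_convex).\<close>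
  interpret sparse_BPG f gf h gh s Lh L x
  proof
    show "(h has_derivative (\<lambda>v. gh z \<bullet> v)) (at z)" for z
      unfolding h_def gh_def by (rule separable_has_derivative[OF hs_deriv])
  qed (rule f_deriv f_convex rel_smooth Lh_pos L_gt bpg)+
  obtain r where "strict_mono r" and "(x \<circ> r) \<longlonglongrightarrow> xbar"
    using limpt by blast
  then show ?thesis
    using tendsto_full_support_limit_point[OF _ _ cond_i cond_ii cond_iii xbar_l0] by blast
qed

end
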